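(* Let $R$ be an amenable affine algebra over a field $K$ with no zero divisors. Then $R$ has Goldie dimension $1$, i.e. any two nonzero left ideals $I,J$ of $R$ satisfy $I\cap J\neq 0$.
   Context: An affine algebra is a finitely generated associative algebra over $K$, not necessarily unital. $R$ is amenable if there exist finite-dimensional $K$-subspaces $W_1\subseteq W_2\subseteq\cdots$ with $\bigcup_nW_n=R$ such that for every $r\in R$, $\lim_{n\to\infty}\dim_K(W_nr+W_n)/\dim_K(W_n)=1$. *)

theory Defs
  imports Complex_Main
begin

definition algebra_over :: "('k::field \<Rightarrow> 'r::ring \<Rightarrow> 'r) \<Rightarrow> bool" where
  "algebra_over scale \<longleftrightarrow> vector_space scale \<and>
     (\<forall>c x y. scale c (x * y) = scale c x * y) \<and>
     (\<forall>c x y. scale c (x * y) = x * scale c y)"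

inductive_set subalg_gen :: "('k::field \<Rightarrow> 'r::ring \<Rightarrow> 'r) \<Rightarrow> 'r set \<Rightarrow> 'r set"
  for scale :: "'k \<Rightarrow> 'r \<Rightarrow> 'r" and S :: "'r set" where
  gen: "x \<in> S \<Longrightarrow> x \<in> subalg_gen scale S"
| zero: "0 \<in> subalg_gen scale S"
| add: "x \<in> subalg_gen scale S \<Longrightarrow> y \<in> subalg_gen scale S \<Longrightarrow> x + y \<in> subalg_gen scale S"
| smult: "x \<in> subalg_gen scale S \<Longrightarrow> scale c x \<in> subalg_gen scale S"
| mult: "x \<in> subalg_gen scale S \<Longrightarrow> y \<in> subalg_gen scale S \<Longrightarrow> x * y \<in> subalg_gen scale S"

definition affine_algebra :: "('k::field \<Rightarrow> 'r::ring \<Rightarrow> 'r) \<Rightarrow> bool" where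
  "affine_algebra scale \<longleftrightarrow> algebra_over scale \<and>
     (\<exists>S. finite S \<and> subalg_gen scale S = UNIV)"

definition fin_dim_subspace :: "('k::field \<Rightarrow> 'r::ring \<Rightarrow> 'r) \<Rightarrow> 'r set \<Rightarrow> bool" where
  "fin_dim_subspace scale W \<longleftrightarrow> (\<exists>B. finite B \<and> W = module.span scale B)"

definition amenable :: "('k::field \<Rightarrow> 'r::ring \<Rightarrow> 'r) \<Rightarrow> bool" where
  "amenable scale \<longleftrightarrow> (\<exists>W :: nat \<Rightarrow> 'r set.
     (\<forall>n. fin_dim_subspace scale (W n)) \<and>
     (\<forall>n. W n \<subseteq> W (Suc n)) \<and>
     (\<Union>n. W n) = UNIV \<and>
     (\<forall>r. (\<lambda>n. real (vector_space.dim scale {w * r + w' | w w'. w \<in> W n \<and> w' \<in> W n})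
                 / real (vector_space.dim scale (W n))) \<longlonglongrightarrow> 1))"

definition left_ideal :: "('k::field \<Rightarrow> 'r::ring \<Rightarrow> 'r) \<Rightarrow> 'r set \<Rightarrow> bool" where
  "left_ideal scale I \<longleftrightarrow> module.subspace scale I \<and> (\<forall>r x. x \<in> I \<longrightarrow> r * x \<in> I)"

end

(* Suppose nonzero left ideals I and J meet trivially, and pick nonzero a \<in> I, b \<in> J.
   Without zero divisors, right multiplication by a and by b is injective, so for every
   finite-dimensional subspace W the images Wa \<subseteq> I and Wb \<subseteq> J form a direct sum of
   dimension 2 dim W.  Since Wr + W contains both W and Wr, a Grassmann-type inequality gives
   dim (Wa + W) + dim (Wb + W) \<ge> dim W + 2 dim W = 3 dim W.  Amenability, however, provides
   W with both ratios dim (Wr + W) / dim W close to 1. *)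

theory Submission
  imports Defs
begin

text \<open>The library's dimension theory for sums and subsets lives in
  \<^locale>\<open>finite_dimensional_vector_space\<close>; the algebra here is infinite-dimensional, so the
  needed facts are proved for subsets of the span of a finite set \<open>F\<close>.\<close>

context vector_space
begin

lemma not_in_span_Un_of_span_Int_zero:
  assumes "independent S" and "x \<in> S" and "span S \<inter> span T = {0}"
  shows "x \<notin> span ((S - {x}) \<union> T)"
proof
  assume "x \<in> span ((S - {x}) \<union> T)"
  then obtain y z where x_eq: "x = y + z" and y: "y \<in> span (S - {x})" and z: "z \<in> span T"
    unfolding span_Un by blast
  have "y \<in> span S"
    using y span_mono[of "S - {x}" S] by blast
  then have "z \<in> span S"
    using x_eq span_diff[OF span_base[OF \<open>x \<in> S\<close>]] by (metis add_diff_cancel_left')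
  with z assms(3) have "z = 0"
    by blast
  with x_eq y have "x \<in> span (S - {x})"
    by simp
  with assms(1,2) show False
    unfolding dependent_def by blast
qed

lemma independent_Un_of_span_Int_zero:
  assumes "independent S" and "independent T" and "span S \<inter> span T = {0}"
  shows "independent (S \<union> T)"
proof
  assume "dependent (S \<union> T)"
  then obtain x where x: "x \<in> S \<union> T" and x_span: "x \<in> span (S \<union> T - {x})"
    unfolding dependent_def by blast
  have "S \<union> T - {x} \<subseteq> (S - {x}) \<union> T" and "S \<union> T - {x} \<subseteq> (T - {x}) \<union> S"
    by blast+
  with x_span have "x \<in> span ((S - {x}) \<union> T)" and "x \<in> span ((T - {x}) \<union> S)"
    using span_mono by blast+
  with x assms show False
    using not_in_span_Un_of_span_Int_zero[of S x T] not_in_span_Un_of_span_Int_zero[of T x S]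
    by blast
qed

lemma finite_basis_exists:
  assumes "S \<subseteq> span F" and "finite F"
  obtains B where "finite B" "B \<subseteq> S" "independent B" "span B = span S" "card B = dim S"
proof -
  obtain B where B: "B \<subseteq> S" "independent B" "S \<subseteq> span B" "card B = dim S"
    by (rule basis_exists)
  have "finite B"
    using independent_span_bound[OF \<open>finite F\<close> B(2)] B(1) assms(1) by auto
  moreover have "span B = span S"
    using B(1,3) by (auto simp: span_eq intro: span_base)
  ultimately show ?thesis
    using that B(1,2,4) by blast
qed

lemma dim_Un_of_span_Int_zero:
  assumes "span S \<inter> span T = {0}" and "S \<union> T \<subseteq> span F" and "finite F"
  shows "dim (S \<union> T) = dim S + dim T"
proof -
  obtain BS where BS: "finite BS" "BS \<subseteq> S" "independent BS" "span BS = span S" "card BS = dim S"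
    using finite_basis_exists[of S F] assms(2,3) by auto
  obtain BT where BT: "finite BT" "BT \<subseteq> T" "independent BT" "span BT = span T" "card BT = dim T"
    using finite_basis_exists[of T F] assms(2,3) by auto
  have "independent (BS \<union> BT)"
    using independent_Un_of_span_Int_zero[OF BS(3) BT(3)] assms(1) BS(4) BT(4) by simp
  moreover have "span (BS \<union> BT) = span (S \<union> T)"
    using BS(4) BT(4) by (simp add: span_Un)
  ultimately have "dim (S \<union> T) = card (BS \<union> BT)"
    by (metis dim_eq_card)
  moreover have "BS \<inter> BT \<subseteq> span S \<inter> span T"
    using BS(2) BT(2) span_superset[of S] span_superset[of T] by auto
  moreover have "0 \<notin> BS"
    using BS(3) dependent_zero by metis
  ultimately show ?thesis
    using card_Un_disjoint[OF BS(1) BT(1)] BS(5) BT(5) assms(1) by auto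
qed

lemma dim_mono_of_finite_span:
  assumes "S \<subseteq> span T" and "T \<subseteq> span F" and "finite F"
  shows "dim S \<le> dim T"
proof -
  obtain B where "finite B" "span B = span T" "card B = dim T"
    using finite_basis_exists[OF assms(2,3)] by metis
  with assms(1) show ?thesis
    by (metis dim_le_card)
qed

lemma dim_pos_of_finite_span:
  assumes "x \<in> S" and "x \<noteq> 0" and "S \<subseteq> span F" and "finite F"
  shows "0 < dim S"
proof -
  obtain B where "finite B" "span B = span S" "card B = dim S"
    using finite_basis_exists[OF assms(3,4)] by metis
  moreover have "B \<noteq> {}"
    using assms(1,2) \<open>span B = span S\<close> span_superset[of S] by auto
  ultimately show ?thesis
    by auto
qed

lemma dim_Un_add_dim_le:
  assumes "U \<subseteq> A" and "U \<subseteq> B" and "A \<union> B \<subseteq> span F" and "finite F"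
  shows "dim (A \<union> B) + dim U \<le> dim A + dim B"
proof -
  obtain C where C: "C \<subseteq> U" "independent C" "card C = dim U"
    by (rule basis_exists)
  have "C \<subseteq> A" and "C \<subseteq> B"
    using C(1) assms(1,2) by auto
  obtain BA where BA: "C \<subseteq> BA" "BA \<subseteq> A" "independent BA" "A \<subseteq> span BA"
    using maximal_independent_subset_extend[OF \<open>C \<subseteq> A\<close> C(2)] by blast
  obtain BB where BB: "C \<subseteq> BB" "BB \<subseteq> B" "independent BB" "B \<subseteq> span BB"
    using maximal_independent_subset_extend[OF \<open>C \<subseteq> B\<close> C(2)] by blast
  have "BA \<subseteq> span F" and "BB \<subseteq> span F"
    using BA(2) BB(2) assms(3) by auto
  then have "finite BA" and "finite BB"
    using independent_span_bound[OF \<open>finite F\<close> BA(3)] independent_span_bound[OF \<open>finite F\<close> BB(3)]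
    by auto
  have "card BA = dim A" and "card BB = dim B"
    using basis_card_eq_dim[OF BA(2,4,3)] basis_card_eq_dim[OF BB(2,4,3)] by auto
  have "A \<union> B \<subseteq> span (BA \<union> BB)"
    using BA(4) BB(4) span_mono[of BA "BA \<union> BB"] span_mono[of BB "BA \<union> BB"] by auto
  then have "dim (A \<union> B) \<le> card (BA \<union> BB)"
    using dim_le_card \<open>finite BA\<close> \<open>finite BB\<close> by auto
  moreover have "card C \<le> card (BA \<inter> BB)"
    using card_mono[of "BA \<inter> BB" C] \<open>finite BA\<close> BA(1) BB(1) by auto
  moreover have "card (BA \<union> BB) + card (BA \<inter> BB) = card BA + card BB"
    using card_Un_Int[OF \<open>finite BA\<close> \<open>finite BB\<close>] by simp
  ultimately show ?thesis
    using C(3) \<open>card BA = dim A\<close> \<open>card BB = dim B\<close> by linarith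
qed

lemma dim_direct_sum_add_dim_le:
  assumes "S \<subseteq> A" and "T \<subseteq> B" and "span S \<inter> span T = {0}"
    and "U \<subseteq> A" and "U \<subseteq> B" and "A \<union> B \<subseteq> span F" and "finite F"
  shows "dim S + dim T + dim U \<le> dim A + dim B"
proof -
  have "S \<union> T \<subseteq> span F"
    using assms(1,2,6) by blast
  then have "dim S + dim T = dim (S \<union> T)"
    using dim_Un_of_span_Int_zero[OF assms(3) _ \<open>finite F\<close>] by simp
  also have "\<dots> \<le> dim (A \<union> B)"
  proof (rule dim_mono_of_finite_span[OF _ assms(6,7)])
    show "S \<union> T \<subseteq> span (A \<union> B)"
      using assms(1,2) span_superset by blast
  qed
  finally show ?thesis
    using dim_Un_add_dim_le[OF assms(4-7)] by linarith
qed

end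

lemma (in Vector_Spaces.linear) dim_image_eq_of_inj_on_span:
  assumes "inj_on f (vs1.span S)"
  shows "vs2.dim (f ` S) = vs1.dim S"
proof -
  obtain B where B: "B \<subseteq> S" "vs1.independent B" "S \<subseteq> vs1.span B" "card B = vs1.dim S"
    by (rule vs1.basis_exists)
  have inj_B: "inj_on f (vs1.span B)"
    using assms vs1.span_mono[OF B(1)] inj_on_subset by blast
  have "f ` S \<subseteq> vs2.span (f ` B)"
    using B(3) span_image by blast
  moreover have "vs2.independent (f ` B)"
    using independent_injective_image B(2) inj_B by blast
  moreover have "card (f ` B) = card B"
    using card_image inj_on_subset[OF inj_B vs1.span_superset] by blast
  moreover have "f ` B \<subseteq> f ` S"
    using B(1) by blast
  ultimately show ?thesis
    using vs2.basis_card_eq_dim[of "f ` B" "f ` S"] B(4) by simp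
qed

abbreviation right_expansion :: "'r::ring set \<Rightarrow> 'r \<Rightarrow> 'r set" where
  "right_expansion W r \<equiv> {w * r + w' | w w'. w \<in> W \<and> w' \<in> W}"

lemma algebra_over_linear_mult_right:
  assumes "algebra_over scale"
  shows "Vector_Spaces.linear scale scale (\<lambda>w. w * a)"
  using assms unfolding algebra_over_def Vector_Spaces.linear_iff by (simp add: distrib_right)

lemma right_expansion_subset_span:
  fixes scale :: "'k::field \<Rightarrow> 'r::ring \<Rightarrow> 'r"
  assumes "algebra_over scale" and "W = module.span scale B"
  shows "right_expansion W r \<subseteq> module.span scale (B \<union> (\<lambda>w. w * r) ` B)"
proof
  interpret Vector_Spaces.linear scale scale "\<lambda>w. w * r"
    using algebra_over_linear_mult_right[OF assms(1)] .
  fix x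
  assume "x \<in> right_expansion W r"
  then obtain w w' where x_eq: "x = w' + w * r" and "w \<in> vs1.span B" "w' \<in> vs1.span B"
    using assms(2) add.commute by blast
  then have "w * r \<in> vs1.span ((\<lambda>w. w * r) ` B)"
    using span_image by blast
  with \<open>w' \<in> vs1.span B\<close> show "x \<in> vs1.span (B \<union> (\<lambda>w. w * r) ` B)"
    unfolding x_eq vs1.span_Un by blast
qed

lemma dim_image_mult_right:
  fixes scale :: "'k::field \<Rightarrow> 'r::ring \<Rightarrow> 'r"
  assumes "algebra_over scale" and "\<forall>a b :: 'r. a * b = 0 \<longrightarrow> a = 0 \<or> b = 0" and "a \<noteq> 0"
  shows "vector_space.dim scale ((\<lambda>w. w * a) ` S) = vector_space.dim scale S"
proof -
  interpret Vector_Spaces.linear scale scale "\<lambda>w. w * a"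
    by (rule algebra_over_linear_mult_right[OF assms(1)])
  have "inj (\<lambda>w. w * a)"
    by (rule injI) (metis assms(2,3) left_diff_distrib eq_iff_diff_eq_0)
  then show ?thesis
    by (auto intro: dim_image_eq_of_inj_on_span inj_on_subset)
qed

lemma three_dim_le_dim_right_expansions:
  fixes scale :: "'k::field \<Rightarrow> 'r::ring \<Rightarrow> 'r"
  assumes alg: "algebra_over scale"
    and no_zero_divisors: "\<forall>a b :: 'r. a * b = 0 \<longrightarrow> a = 0 \<or> b = 0"
    and I: "left_ideal scale I" and J: "left_ideal scale J" and "I \<inter> J = {0}"
    and "a \<in> I" "a \<noteq> 0" and "b \<in> J" "b \<noteq> 0"
    and "fin_dim_subspace scale W"
  shows "3 * vector_space.dim scale W \<le>
    vector_space.dim scale (right_expansion W a) + vector_space.dim scale (right_expansion W b)"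
proof -
  interpret vector_space scale
    using alg unfolding algebra_over_def by blast
  obtain B where "finite B" and W: "W = span B"
    using \<open>fin_dim_subspace scale W\<close> unfolding fin_dim_subspace_def by blast
  define Wa where "Wa = (\<lambda>w. w * a) ` W"
  define Wb where "Wb = (\<lambda>w. w * b) ` W"
  define F where "F = B \<union> (\<lambda>w. w * a) ` B \<union> (\<lambda>w. w * b) ` B"
  have "finite F"
    unfolding F_def using \<open>finite B\<close> by blast
  have expansions_span: "right_expansion W a \<union> right_expansion W b \<subseteq> span F"
    using right_expansion_subset_span[OF alg W, of a] right_expansion_subset_span[OF alg W, of b]
      span_mono[of "B \<union> (\<lambda>w. w * a) ` B" F] span_mono[of "B \<union> (\<lambda>w. w * b) ` B" F]
    unfolding F_def by blast
  have "0 \<in> W"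
    unfolding W by (rule span_zero)
  then have W_sub: "W \<subseteq> right_expansion W a" "W \<subseteq> right_expansion W b"
    and Wa_sub: "Wa \<subseteq> right_expansion W a" and Wb_sub: "Wb \<subseteq> right_expansion W b"
    unfolding Wa_def Wb_def by force+
  have "Wa \<subseteq> I" and "Wb \<subseteq> J"
    unfolding Wa_def Wb_def using I J \<open>a \<in> I\<close> \<open>b \<in> J\<close> unfolding left_ideal_def by blast+
  then have "span Wa \<subseteq> I" and "span Wb \<subseteq> J"
    using I J span_minimal unfolding left_ideal_def by blast+
  with \<open>I \<inter> J = {0}\<close> have "span Wa \<inter> span Wb = {0}"
    using span_zero by blast
  have "dim Wa = dim W" and "dim Wb = dim W"
    unfolding Wa_def Wb_def
    using dim_image_mult_right[OF alg no_zero_divisors] \<open>a \<noteq> 0\<close> \<open>b \<noteq> 0\<close> by auto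
  with dim_direct_sum_add_dim_le[OF Wa_sub Wb_sub \<open>span Wa \<inter> span Wb = {0}\<close> W_sub
      expansions_span \<open>finite F\<close>]
  show ?thesis
    by linarith
qed

lemma amenable_obtains_small_right_expansions:
  fixes scale :: "'k::field \<Rightarrow> 'r::ring \<Rightarrow> 'r"
  assumes "vector_space scale" and "amenable scale" and "(x::'r) \<noteq> 0" and "2 < c"
  obtains W where "fin_dim_subspace scale W"
    and "real (vector_space.dim scale (right_expansion W a))
       + real (vector_space.dim scale (right_expansion W b)) < c * real (vector_space.dim scale W)"
proof -
  interpret vector_space scale by fact
  obtain Ws :: "nat \<Rightarrow> 'r set" where fin_dim: "\<And>n. fin_dim_subspace scale (Ws n)"
    and mono: "\<And>n. Ws n \<subseteq> Ws (Suc n)" and exhaust: "(\<Union>n. Ws n) = UNIV"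
    and ratio: "\<And>r. (\<lambda>n. real (dim (right_expansion (Ws n) r)) / real (dim (Ws n))) \<longlonglongrightarrow> 1"
    using assms(2) unfolding amenable_def by blast
  have "(\<lambda>n. real (dim (right_expansion (Ws n) a)) / real (dim (Ws n))
           + real (dim (right_expansion (Ws n) b)) / real (dim (Ws n))) \<longlonglongrightarrow> 1 + 1"
    by (intro tendsto_add ratio)
  then have "eventually (\<lambda>n. real (dim (right_expansion (Ws n) a)) / real (dim (Ws n))
           + real (dim (right_expansion (Ws n) b)) / real (dim (Ws n)) < c) sequentially"
    using \<open>2 < c\<close> by (intro order_tendstoD(2)) simp_all
  moreover obtain N where "x \<in> Ws N"
    using exhaust by blast
  then have "eventually (\<lambda>n. x \<in> Ws n) sequentially"
    using lift_Suc_mono_le[of Ws, OF mono] by (auto simp: eventually_sequentially)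
  ultimately obtain n where small: "real (dim (right_expansion (Ws n) a)) / real (dim (Ws n))
           + real (dim (right_expansion (Ws n) b)) / real (dim (Ws n)) < c" and "x \<in> Ws n"
    by (metis (mono_tags, lifting) eventually_conj eventually_sequentially order.refl)
  obtain B where "finite B" "Ws n = span B"
    using fin_dim[of n] unfolding fin_dim_subspace_def by blast
  then have "0 < dim (Ws n)"
    using dim_pos_of_finite_span[OF \<open>x \<in> Ws n\<close> \<open>x \<noteq> 0\<close>, of B] by simp
  with small have "real (dim (right_expansion (Ws n) a)) + real (dim (right_expansion (Ws n) b))
      < c * real (dim (Ws n))"
    by (simp add: add_divide_distrib[symmetric] divide_less_eq)
  with fin_dim show thesis
    by (rule that)
qed

theorem proposition6:
  fixes scale :: "'k::field \<Rightarrow> 'r::ring \<Rightarrow> 'r"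
  assumes "affine_algebra scale"
    and "amenable scale"
    and "\<forall>a b :: 'r. a * b = 0 \<longrightarrow> a = 0 \<or> b = 0"
    and "left_ideal scale I" and "I \<noteq> {0}"
    and "left_ideal scale J" and "J \<noteq> {0}"
  shows "I \<inter> J \<noteq> {0}"
proof
  assume "I \<inter> J = {0}"
  have alg: "algebra_over scale"
    using assms(1) unfolding affine_algebra_def by blast
  then interpret vector_space scale
    unfolding algebra_over_def by blast
  obtain a where "a \<in> I" "a \<noteq> 0"
    using assms(4,5) subspace_0 unfolding left_ideal_def by blast
  obtain b where "b \<in> J" "b \<noteq> 0"
    using assms(6,7) subspace_0 unfolding left_ideal_def by blast
  have "(2::real) < 3"
    by simp
  then obtain W where "fin_dim_subspace scale W"
    and small: "real (dim (right_expansion W a)) + real (dim (right_expansion W b)) < 3 * real (dim W)"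
    by (rule amenable_obtains_small_right_expansions[OF vector_space_axioms assms(2) \<open>a \<noteq> 0\<close>])
  have "3 * dim W \<le> dim (right_expansion W a) + dim (right_expansion W b)"
    by (rule three_dim_le_dim_right_expansions[OF alg assms(3,4,6) \<open>I \<inter> J = {0}\<close>
          \<open>a \<in> I\<close> \<open>a \<noteq> 0\<close> \<open>b \<in> J\<close> \<open>b \<noteq> 0\<close> \<open>fin_dim_subspace scale W\<close>])
  then have "real (3 * dim W) \<le> real (dim (right_expansion W a) + dim (right_expansion W b))"
    by (rule of_nat_mono)
  with small show False
    by simp
qed

end
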